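(* Let $G$ be a Klee-graph. For every $v\in V(G)$ there exists a $v$-join of $G$.
   Context: For a cubic graph $G$ and $v\in V(G)$, a $v$-join of $G$ is a spanning subgraph in which $v$ has degree $3$ and every other vertex has degree $1$. For a cubic graph $G$ and $v\in V(G)$ with neighbours $x_1,x_2,x_3$, $G^v$ denotes the cubic graph obtained by replacing $v$ by a triangle: delete $v$, add new vertices $v_1,v_2,v_3$, the edges $v_1v_2,v_2v_3,v_3v_1$, and the edges $v_ix_i$ for $i=1,2,3$. A graph is a Klee-graph if it is $K_4$, or it equals $H^w$ for some Klee-graph $H$ and some $w\in V(H)$. *)

theory Defs
  imports Main
begin

definition graph_deg :: "'a set set \<Rightarrow> 'a \<Rightarrow> nat" where
  "graph_deg E v = card {e \<in> E. v \<in> e}"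

definition cubic_graph :: "'a set \<Rightarrow> 'a set set \<Rightarrow> bool" where
  "cubic_graph V E \<longleftrightarrow> finite V \<and> (\<forall>e\<in>E. e \<subseteq> V \<and> card e = 2)
     \<and> (\<forall>v\<in>V. graph_deg E v = 3)"

definition complete_edges :: "'a set \<Rightarrow> 'a set set" where
  "complete_edges V = {{x, y} | x y. x \<in> V \<and> y \<in> V \<and> x \<noteq> y}"

text \<open>G^w: replace vertex w (neighbours x1,x2,x3) by a triangle on new vertices v1,v2,v3.\<close>
definition triangle_replace_V :: "'a set \<Rightarrow> 'a \<Rightarrow> 'a \<Rightarrow> 'a \<Rightarrow> 'a \<Rightarrow> 'a set" where
  "triangle_replace_V V w v1 v2 v3 = (V - {w}) \<union> {v1, v2, v3}"

definition triangle_replace_E :: "'a set set \<Rightarrow> 'a \<Rightarrow> 'a \<Rightarrow> 'a \<Rightarrow> 'a \<Rightarrow> 'a \<Rightarrow> 'a \<Rightarrow> 'a \<Rightarrow> 'a set set" where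
  "triangle_replace_E E w v1 v2 v3 x1 x2 x3 =
     {e \<in> E. w \<notin> e} \<union> {{v1, v2}, {v2, v3}, {v3, v1}, {v1, x1}, {v2, x2}, {v3, x3}}"

text \<open>Klee-graphs (up to the choice of vertex labels): K4, or H^w for a Klee-graph H.\<close>
inductive klee_graph :: "'a set \<Rightarrow> 'a set set \<Rightarrow> bool" where
  K4: "card V = 4 \<Longrightarrow> klee_graph V (complete_edges V)"
| step: "\<lbrakk> klee_graph V E; w \<in> V;
           {u. {w, u} \<in> E} = {x1, x2, x3}; x1 \<noteq> x2; x2 \<noteq> x3; x1 \<noteq> x3;
           v1 \<noteq> v2; v2 \<noteq> v3; v1 \<noteq> v3;
           v1 \<notin> V - {w}; v2 \<notin> V - {w}; v3 \<notin> V - {w} \<rbrakk>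
        \<Longrightarrow> klee_graph (triangle_replace_V V w v1 v2 v3)
                       (triangle_replace_E E w v1 v2 v3 x1 x2 x3)"

definition v_join :: "'a set \<Rightarrow> 'a set set \<Rightarrow> 'a \<Rightarrow> 'a set set \<Rightarrow> bool" where
  "v_join V E v F \<longleftrightarrow> F \<subseteq> E \<and> graph_deg F v = 3 \<and> (\<forall>u \<in> V - {v}. graph_deg F u = 1)"

end

theory Submission
  imports Defs
begin

text \<open>
  Induct along the construction of a Klee graph, proving more: every vertex v has a v-join and
  every edge lies in a perfect matching. Let G^w replace w by the triangle v1 v2 v3, with v_i
  joined to the neighbour x_i of w. A v-join (v \<noteq> w) or a perfect matching of G contains exactly
  one edge w x_i; replacing it by v_i x_i and the opposite triangle edge gives the corresponding
  object in G^w, and the lifted perfect matchings through w x_i cover the new edges. A v_i-join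
  of G^w arises from a perfect matching of G through w x_i by replacing w x_i with v_i x_i and
  the two triangle edges at v_i.
\<close>

lemma graph_deg_empty [simp]: "graph_deg {} u = 0"
  by (simp add: graph_deg_def)

lemma graph_deg_insert [simp]:
  assumes "finite A"
  shows "graph_deg (insert e A) u =
    (if u \<in> e \<and> e \<notin> A then Suc (graph_deg A u) else graph_deg A u)"
proof -
  have "{e' \<in> insert e A. u \<in> e'} = (if u \<in> e then insert e {e' \<in> A. u \<in> e'} else {e' \<in> A. u \<in> e'})"
    by auto
  then show ?thesis using assms by (simp add: graph_deg_def insert_absorb)
qed

lemma graph_deg_Un_disjoint:
  assumes "finite A" "finite B" "A \<inter> B = {}"
  shows "graph_deg (A \<union> B) u = graph_deg A u + graph_deg B u"
proof -
  have "{e \<in> A \<union> B. u \<in> e} = {e \<in> A. u \<in> e} \<union> {e \<in> B. u \<in> e}" by auto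
  then show ?thesis
    unfolding graph_deg_def using assms by (simp add: card_Un_disjoint disjoint_iff)
qed

lemma graph_deg_Diff_singleton:
  assumes "finite F" "e \<in> F"
  shows "graph_deg (F - {e}) u = graph_deg F u - (if u \<in> e then 1 else 0)"
proof -
  have "{e' \<in> F - {e}. u \<in> e'} = {e' \<in> F. u \<in> e'} - {e}" by auto
  then show ?thesis unfolding graph_deg_def using assms by simp
qed

lemma graph_deg_eq_0: "\<forall>e\<in>F. u \<notin> e \<Longrightarrow> graph_deg F u = 0"
  unfolding graph_deg_def by (metis (no_types, lifting) card.empty empty_Collect_eq)

lemma graph_deg_pos:
  assumes "finite F" "e \<in> F" "u \<in> e"
  shows "graph_deg F u \<ge> 1"
proof -
  have "{e \<in> F. u \<in> e} \<noteq> {}" using assms by blast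
  then show ?thesis using assms(1) by (simp add: graph_deg_def Suc_le_eq card_gt_0_iff)
qed

lemma graph_deg_1_unique:
  assumes "graph_deg F u = 1" "e \<in> F" "u \<in> e" "e' \<in> F" "u \<in> e'"
  shows "e' = e"
proof -
  obtain a where a: "{e \<in> F. u \<in> e} = {a}"
    using assms(1) by (auto simp: graph_deg_def card_1_singleton_iff)
  have "e \<in> {a}" "e' \<in> {a}" using assms(2-) unfolding a[symmetric] by simp_all
  then show ?thesis by simp
qed

definition simple_graph :: "'a set \<Rightarrow> 'a set set \<Rightarrow> bool" where
  "simple_graph V E \<longleftrightarrow> finite V \<and> (\<forall>e\<in>E. e \<subseteq> V \<and> card e = 2)"

definition perfect_matching :: "'a set \<Rightarrow> 'a set set \<Rightarrow> 'a set set \<Rightarrow> bool" where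
  "perfect_matching V E M \<longleftrightarrow> M \<subseteq> E \<and> (\<forall>u\<in>V. graph_deg M u = 1)"

lemma simple_graph_finite_edges: "simple_graph V E \<Longrightarrow> finite E"
proof -
  assume "simple_graph V E"
  then have "E \<subseteq> Pow V" "finite V" unfolding simple_graph_def by auto
  then show "finite E" by (simp add: finite_subset)
qed

lemma simple_graph_edge:
  assumes "simple_graph V E" "e \<in> E" "w \<in> e"
  obtains y where "e = {w, y}" "y \<in> V" "y \<noteq> w"
proof -
  have "e \<subseteq> V" "card e = 2" using assms unfolding simple_graph_def by auto
  then obtain a b where "e = {a, b}" "a \<noteq> b" by (auto simp: card_2_iff)
  moreover have "{b, a} = {a, b}" by (rule insert_commute)
  ultimately show ?thesis
    using that[of b] that[of a] \<open>w \<in> e\<close> \<open>e \<subseteq> V\<close> by (cases "w = a") auto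
qed

definition join_matching_property :: "'a set \<Rightarrow> 'a set set \<Rightarrow> bool" where
  "join_matching_property V E \<longleftrightarrow> simple_graph V E \<and> (\<forall>v\<in>V. \<exists>F. v_join V E v F)
     \<and> (\<forall>e\<in>E. \<exists>M. perfect_matching V E M \<and> e \<in> M)"

lemma join_matching_property_K4:
  assumes "card V = 4"
  shows "join_matching_property V (complete_edges V)"
  unfolding join_matching_property_def
proof (intro conjI ballI)
  have fin: "finite V" using assms by (metis card.infinite zero_neq_numeral)
  then show "simple_graph V (complete_edges V)"
    unfolding simple_graph_def complete_edges_def by auto
  fix v assume v: "v \<in> V"
  then have "card (V - {v}) = 3" using assms fin by simp
  then obtain p q r where pqr: "V - {v} = {p, q, r}" "p \<noteq> q" "p \<noteq> r" "q \<noteq> r"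
    by (auto simp: card_3_iff)
  let ?F = "{{v, p}, {v, q}, {v, r}}"
  have "?F \<subseteq> complete_edges V" "graph_deg ?F v = 3" "\<forall>u\<in>V - {v}. graph_deg ?F u = 1"
    using pqr v unfolding complete_edges_def by (auto simp: doubleton_eq_iff)
  then show "\<exists>F. v_join V (complete_edges V) v F" unfolding v_join_def by blast
next
  have fin: "finite V" using assms by (metis card.infinite zero_neq_numeral)
  fix e assume "e \<in> complete_edges V"
  then obtain x y where xy: "e = {x, y}" "x \<in> V" "y \<in> V" "x \<noteq> y"
    unfolding complete_edges_def by blast
  then have "card (V - {x, y}) = 2" using assms fin by (simp add: card_Diff_subset)
  then obtain p q where pq: "V - {x, y} = {p, q}" "p \<noteq> q" by (auto simp: card_2_iff)
  let ?M = "{{x, y}, {p, q}}"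
  have "?M \<subseteq> complete_edges V" "\<forall>u\<in>V. graph_deg ?M u = 1"
    using pq xy unfolding complete_edges_def by (auto simp: doubleton_eq_iff)
  then show "\<exists>M. perfect_matching V (complete_edges V) M \<and> e \<in> M"
    unfolding perfect_matching_def xy(1) by blast
qed

locale triangle_blowup =
  fixes V :: "'a set" and E :: "'a set set" and w v1 v2 v3 x1 x2 x3 :: 'a
  assumes simple: "simple_graph V E" and w_in: "w \<in> V"
    and neighbours: "{u. {w, u} \<in> E} = {x1, x2, x3}"
    and v_distinct: "v1 \<noteq> v2" "v2 \<noteq> v3" "v1 \<noteq> v3"
    and v_fresh: "v1 \<notin> V - {w}" "v2 \<notin> V - {w}" "v3 \<notin> V - {w}"
begin

abbreviation V' :: "'a set" where
  "V' \<equiv> triangle_replace_V V w v1 v2 v3"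

abbreviation E' :: "'a set set" where
  "E' \<equiv> triangle_replace_E E w v1 v2 v3 x1 x2 x3"

abbreviation triangle_edges :: "'a set set" where
  "triangle_edges \<equiv> {{v1, v2}, {v2, v3}, {v3, v1}, {v1, x1}, {v2, x2}, {v3, x3}}"

lemma V'_eq: "V' = (V - {w}) \<union> {v1, v2, v3}"
  by (simp add: triangle_replace_V_def)

lemma E'_eq: "E' = {e \<in> E. w \<notin> e} \<union> triangle_edges"
  by (simp add: triangle_replace_E_def)

lemma neighbour_edges: "{w, x1} \<in> E" "{w, x2} \<in> E" "{w, x3} \<in> E"
  using neighbours by blast+

lemma neighbours_old: "x1 \<in> V - {w}" "x2 \<in> V - {w}" "x3 \<in> V - {w}"
  using simple_graph_edge[OF simple neighbour_edges(1)]
    simple_graph_edge[OF simple neighbour_edges(2)]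
    simple_graph_edge[OF simple neighbour_edges(3)]
  by (metis DiffI doubleton_eq_iff insertI1 singletonD)+

lemma old_ne_new: "u \<in> V - {w} \<Longrightarrow> u \<notin> {v1, v2, v3}"
  using v_fresh by blast

lemmas neighbours_ne_new = neighbours_old[THEN old_ne_new]

text \<open>G^w is invariant under rotating the indices 1, 2, 3, so everything proved below for the
  neighbour x1 transfers to x2 and x3.\<close>

lemma rotate:
  "triangle_blowup V E w v2 v3 v1 x2 x3 x1"
  "triangle_blowup V E w v3 v1 v2 x3 x1 x2"
  using simple w_in neighbours v_distinct v_fresh
  by (unfold_locales; auto simp: insert_commute)+

lemma V'_rotate:
  "triangle_replace_V V w v2 v3 v1 = V'"
  "triangle_replace_V V w v3 v1 v2 = V'"
  by (auto simp: triangle_replace_V_def)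

lemma E'_rotate:
  "triangle_replace_E E w v2 v3 v1 x2 x3 x1 = E'"
  "triangle_replace_E E w v3 v1 v2 x3 x1 x2 = E'"
  by (auto simp: triangle_replace_E_def insert_commute)

lemma simple_graph_blowup: "simple_graph V' E'"
proof -
  have "finite V'" using simple by (simp add: simple_graph_def V'_eq)
  moreover have "e \<subseteq> V' \<and> card e = 2" if "e \<in> E'" for e
  proof -
    from that consider "e \<in> E" "w \<notin> e" | "e \<in> triangle_edges" unfolding E'_eq by blast
    then show ?thesis
    proof cases
      case 1
      then have "e \<subseteq> V - {w}" "card e = 2" using simple by (auto simp: simple_graph_def)
      then show ?thesis unfolding V'_eq by blast
    next
      case 2
      then show ?thesis using v_distinct neighbours_ne_new neighbours_old unfolding V'_eq by auto
    qed
  qed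
  ultimately show ?thesis by (simp add: simple_graph_def)
qed

lemma exchange_edge_at_w:
  assumes F: "F \<subseteq> E" and wx: "{w, x1} \<in> F" and dw: "graph_deg F w = 1"
    and T: "T \<subseteq> triangle_edges"
  shows exchange_subset: "(F - {{w, x1}}) \<union> T \<subseteq> E'"
    and exchange_deg_old: "u \<in> V - {w} \<Longrightarrow>
      graph_deg ((F - {{w, x1}}) \<union> T) u = graph_deg F u - (if u = x1 then 1 else 0) + graph_deg T u"
    and exchange_deg_new: "u \<in> {v1, v2, v3} \<Longrightarrow> graph_deg ((F - {{w, x1}}) \<union> T) u = graph_deg T u"
proof -
  have finF: "finite F" using F simple_graph_finite_edges[OF simple] finite_subset by blast
  have finT: "finite T" using T finite_subset by blast
  have old_edges: "e \<subseteq> V - {w}" if "e \<in> F - {{w, x1}}" for e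
    using that graph_deg_1_unique[OF dw wx] F simple by (auto simp: simple_graph_def)
  have "t \<inter> {v1, v2, v3} \<noteq> {}" if "t \<in> T" for t using that T by auto
  then have disjoint: "(F - {{w, x1}}) \<inter> T = {}" using old_edges v_fresh by blast
  have split: "graph_deg ((F - {{w, x1}}) \<union> T) u = graph_deg (F - {{w, x1}}) u + graph_deg T u"
    for u using finF finT disjoint by (simp add: graph_deg_Un_disjoint)
  have "F - {{w, x1}} \<subseteq> {e \<in> E. w \<notin> e}" using old_edges F by blast
  then show "(F - {{w, x1}}) \<union> T \<subseteq> E'"
    unfolding E'_eq using T by (rule Un_mono)
  show "graph_deg ((F - {{w, x1}}) \<union> T) u = graph_deg F u - (if u = x1 then 1 else 0) + graph_deg T u"
    if "u \<in> V - {w}" for u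
    using that split graph_deg_Diff_singleton[OF finF wx] by simp
  show "graph_deg ((F - {{w, x1}}) \<union> T) u = graph_deg T u" if "u \<in> {v1, v2, v3}" for u
  proof -
    have "graph_deg (F - {{w, x1}}) u = 0"
      using that old_edges old_ne_new by (intro graph_deg_eq_0) blast
    then show ?thesis using split by simp
  qed
qed

definition lifts :: "'a set set \<Rightarrow> 'a set set \<Rightarrow> bool" where
  "lifts F F' \<longleftrightarrow> F' \<subseteq> E' \<and> (\<forall>u\<in>V - {w}. graph_deg F' u = graph_deg F u)
     \<and> (\<forall>u\<in>{v1, v2, v3}. graph_deg F' u = 1) \<and> {e \<in> F. w \<notin> e} \<subseteq> F'"

lemma lifts_via_x1:
  assumes F: "F \<subseteq> E" and wx: "{w, x1} \<in> F" and dw: "graph_deg F w = 1"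
  shows "\<exists>F'. lifts F F' \<and> {v1, x1} \<in> F' \<and> {v2, v3} \<in> F'"
proof -
  let ?T = "{{v1, x1}, {v2, v3}}"
  let ?F' = "(F - {{w, x1}}) \<union> ?T"
  have T: "?T \<subseteq> triangle_edges" by (simp only: insert_subset insert_iff empty_subsetI simp_thms)
  have x1_deg: "graph_deg F x1 \<ge> 1"
    using graph_deg_pos[OF finite_subset[OF F simple_graph_finite_edges[OF simple]] wx] by simp
  have "graph_deg ?F' u = graph_deg F u" if u: "u \<in> V - {w}" for u
  proof -
    have "graph_deg ?F' u = graph_deg F u - (if u = x1 then 1 else 0) + graph_deg ?T u"
      by (rule exchange_deg_old[OF F wx dw T u])
    also have "graph_deg ?T u = (if u = x1 then 1 else 0)"
      using old_ne_new[OF u] neighbours_ne_new by (simp add: doubleton_eq_iff)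
    finally show ?thesis using x1_deg by simp
  qed
  moreover have "graph_deg ?F' u = 1" if u: "u \<in> {v1, v2, v3}" for u
  proof -
    have "graph_deg ?F' u = graph_deg ?T u" by (rule exchange_deg_new[OF F wx dw T u])
    also have "\<dots> = 1" using u v_distinct neighbours_ne_new by (auto simp: doubleton_eq_iff)
    finally show ?thesis .
  qed
  moreover have "{e \<in> F. w \<notin> e} \<subseteq> ?F'" by blast
  ultimately show ?thesis
    using exchange_subset[OF F wx dw T] unfolding lifts_def by blast
qed

lemma lifts_rotate:
  "triangle_blowup.lifts V E w v2 v3 v1 x2 x3 x1 = lifts"
  "triangle_blowup.lifts V E w v3 v1 v2 x3 x1 x2 = lifts"
  unfolding triangle_blowup.lifts_def[OF rotate(1)] triangle_blowup.lifts_def[OF rotate(2)]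
    lifts_def E'_rotate by (auto simp: insert_commute fun_eq_iff)

lemma lifts_exists:
  assumes F: "F \<subseteq> E" and dw: "graph_deg F w = 1"
  shows "\<exists>F'. lifts F F'"
proof -
  obtain e where e: "e \<in> F" "w \<in> e"
    using dw by (auto simp: graph_deg_def card_1_singleton_iff)
  then obtain y where "e = {w, y}" using simple_graph_edge[OF simple] F by blast
  then have "{w, y} \<in> F" "y \<in> {x1, x2, x3}" using e F neighbours by blast+
  then consider "{w, x1} \<in> F" | "{w, x2} \<in> F" | "{w, x3} \<in> F" by blast
  then show ?thesis
  proof cases
    case 1
    then show ?thesis using lifts_via_x1[OF F _ dw] by blast
  next
    case 2
    then show ?thesis using triangle_blowup.lifts_via_x1[OF rotate(1) F _ dw] lifts_rotate by auto
  next
    case 3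
    then show ?thesis using triangle_blowup.lifts_via_x1[OF rotate(2) F _ dw] lifts_rotate by auto
  qed
qed

lemma v_join_lift:
  assumes F: "v_join V E v F" and v: "v \<in> V - {w}" and F': "lifts F F'"
  shows "v_join V' E' v F'"
proof -
  have "graph_deg F' u = 1" if u: "u \<in> V' - {v}" for u
  proof (cases "u \<in> V - {w}")
    case True
    then show ?thesis using u F F' by (auto simp: v_join_def lifts_def)
  next
    case False
    then have "u \<in> {v1, v2, v3}" using u V'_eq by blast
    then show ?thesis using F' by (auto simp: lifts_def)
  qed
  then show ?thesis using F v F' by (simp add: v_join_def lifts_def)
qed

lemma perfect_matching_lift:
  assumes "perfect_matching V E M" "lifts M M'"
  shows "perfect_matching V' E' M'"
  using assms by (auto simp: perfect_matching_def lifts_def V'_eq)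

lemma v_join_at_v1:
  assumes M: "perfect_matching V E M" and wx: "{w, x1} \<in> M"
  shows "\<exists>F. v_join V' E' v1 F"
proof -
  have ME: "M \<subseteq> E" and dM: "\<forall>u\<in>V. graph_deg M u = 1"
    using M by (auto simp: perfect_matching_def)
  have dw: "graph_deg M w = 1" using dM w_in by blast
  let ?T = "{{v1, x1}, {v1, v2}, {v3, v1}}"
  let ?F = "(M - {{w, x1}}) \<union> ?T"
  have T: "?T \<subseteq> triangle_edges" by (simp only: insert_subset insert_iff empty_subsetI simp_thms)
  have "graph_deg ?F u = 1" if u: "u \<in> V - {w}" for u
  proof -
    have "graph_deg ?F u = graph_deg M u - (if u = x1 then 1 else 0) + graph_deg ?T u"
      by (rule exchange_deg_old[OF ME wx dw T u])
    also have "graph_deg ?T u = (if u = x1 then 1 else 0)"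
      using old_ne_new[OF u] neighbours_ne_new by (simp add: doubleton_eq_iff)
    finally show ?thesis using u dM by simp
  qed
  moreover have "graph_deg ?F u = graph_deg ?T u" if "u \<in> {v1, v2, v3}" for u
    using exchange_deg_new[OF ME wx dw T that] .
  moreover have "graph_deg ?T v1 = 3" "graph_deg ?T v2 = 1" "graph_deg ?T v3 = 1"
    using v_distinct neighbours_ne_new by (auto simp: doubleton_eq_iff)
  ultimately have "v_join V' E' v1 ?F"
    using exchange_subset[OF ME wx dw T] unfolding v_join_def V'_eq by auto
  then show ?thesis by blast
qed

lemma perfect_matching_through_x1:
  assumes M: "perfect_matching V E M" and wx: "{w, x1} \<in> M"
  shows "\<exists>M'. perfect_matching V' E' M' \<and> {v1, x1} \<in> M' \<and> {v2, v3} \<in> M'"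
proof -
  have "M \<subseteq> E" "graph_deg M w = 1" using M w_in by (auto simp: perfect_matching_def)
  then obtain M' where "lifts M M'" "{v1, x1} \<in> M'" "{v2, v3} \<in> M'"
    using lifts_via_x1 wx by blast
  then show ?thesis using perfect_matching_lift[OF M] by blast
qed

lemma join_matching_property_blowup:
  assumes "join_matching_property V E"
  shows "join_matching_property V' E'"
proof -
  have joins: "\<forall>v\<in>V. \<exists>F. v_join V E v F"
    and matchings: "\<forall>e\<in>E. \<exists>M. perfect_matching V E M \<and> e \<in> M"
    using assms by (auto simp: join_matching_property_def)
  obtain M1 M2 M3 where M:
    "perfect_matching V E M1" "{w, x1} \<in> M1"
    "perfect_matching V E M2" "{w, x2} \<in> M2"
    "perfect_matching V E M3" "{w, x3} \<in> M3"
    using matchings neighbour_edges by meson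
  note rotated = triangle_blowup.v_join_at_v1[OF rotate(1) M(3,4)]
    triangle_blowup.v_join_at_v1[OF rotate(2) M(5,6)]
    triangle_blowup.perfect_matching_through_x1[OF rotate(1) M(3,4)]
    triangle_blowup.perfect_matching_through_x1[OF rotate(2) M(5,6)]
  note joins_new = v_join_at_v1[OF M(1,2)] rotated(1,2)[unfolded V'_rotate E'_rotate]
  note matchings_new =
    perfect_matching_through_x1[OF M(1,2)] rotated(3,4)[unfolded V'_rotate E'_rotate]
  have "\<exists>F. v_join V' E' v F" if "v \<in> V'" for v
  proof -
    from that consider "v \<in> V - {w}" | "v \<in> {v1, v2, v3}" unfolding V'_eq by blast
    then show ?thesis
    proof cases
      case 1
      then obtain F where F: "v_join V E v F" using joins by blast
      then have "F \<subseteq> E" "graph_deg F w = 1" using 1 w_in by (auto simp: v_join_def)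
      then obtain F' where "lifts F F'" using lifts_exists by blast
      then show ?thesis using v_join_lift[OF F 1] by blast
    next
      case 2
      then show ?thesis using joins_new by blast
    qed
  qed
  moreover have "\<exists>M'. perfect_matching V' E' M' \<and> e \<in> M'" if "e \<in> E'" for e
  proof -
    from that consider "e \<in> E" "w \<notin> e" | "e \<in> triangle_edges" unfolding E'_eq by blast
    then show ?thesis
    proof cases
      case 1
      then obtain M where M: "perfect_matching V E M" "e \<in> M" using matchings by blast
      then have "M \<subseteq> E" "graph_deg M w = 1" using w_in by (auto simp: perfect_matching_def)
      then obtain M' where M': "lifts M M'" using lifts_exists by blast
      then have "e \<in> M'" using M(2) 1 by (auto simp: lifts_def)
      then show ?thesis using perfect_matching_lift[OF M(1) M'] by blast
    next
      case 2
      then show ?thesis using matchings_new by (auto simp: insert_commute)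
    qed
  qed
  ultimately show ?thesis
    unfolding join_matching_property_def using simple_graph_blowup by blast
qed

end

lemma klee_graph_join_matching_property:
  "klee_graph V E \<Longrightarrow> join_matching_property V E"
proof (induction rule: klee_graph.induct)
  case (K4 V)
  then show ?case by (rule join_matching_property_K4)
next
  case (step V E w x1 x2 x3 v1 v2 v3)
  then interpret triangle_blowup V E w v1 v2 v3 x1 x2 x3
    by unfold_locales (auto simp: join_matching_property_def)
  show ?case using join_matching_property_blowup step.IH .
qed

theorem mainTheorem6:
  fixes V :: "'a set" and E :: "'a set set" and v :: 'a
  assumes "klee_graph V E" and "v \<in> V"
  shows "\<exists>F. v_join V E v F"
  using klee_graph_join_matching_property[OF assms(1)] assms(2)
  by (auto simp: join_matching_property_def)

end
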